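(* Let $\hat\mu\in\operatorname{conv}\{g_1,\dots,g_N\}$ and consider the MW–MMW rounds for the fixed center $\hat\mu$ with $w^{(1)}$ having positive entries and $0<\eta_\rho\nu\le1/2$, $0<\eta_w\nu\le 1/2$. Then for every $w\in\Delta_{N,\epsilon}$ and every $\rho\in\mathfrak D_p$, $$\sum_{t=1}^T\langle S^{(t)},\rho\rangle\le(1+\eta_\rho\nu)(1+\eta_w\nu)\sum_{t=1}^T\langle m^{(t)},w\rangle+\frac{(1+\eta_\rho\nu)\,\mathrm{RE}(w\|w^{(1)})}{\eta_w}+\frac{\log p}{\eta_\rho}.$$ In particular, for the uniform initialization $w^{(1)}=(1/N,\dots,1/N)$, $$\sum_{t=1}^T\langle S^{(t)},\rho\rangle\le(1+\eta_\rho\nu)(1+\eta_w\nu)\sum_{t=1}^T\langle m^{(t)},w\rangle+\frac{(1+\eta_\rho\nu)\log\frac{1}{1-\epsilon}}{\eta_w}+\frac{\log p}{\eta_\rho}.$$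
   Context: Fix integers $N\ge1$, $p\ge1$, $\epsilon\in[0,1)$ and vectors $g_1,\dots,g_N\in\mathbb R^p$. The capped simplex is $\Delta_{N,\epsilon}=\{w\in\mathbb R^N:\sum_n w_n=1,\ 0\le w_n\le \frac{1}{(1-\epsilon)N}\}$; density matrices $\mathfrak D_p=\{\rho\in\mathbb R^{p\times p}:\rho=\rho^\top\succeq0,\mathrm{Tr}\,\rho=1\}$; $\langle A,B\rangle=\mathrm{Tr}(A^\top B)$; $\nu=\max_{i,j}\|g_i-g_j\|_2^2$. Relative entropy: $\mathrm{RE}(w\|v)=\sum_n w_n\log(w_n/v_n)$ (with $0\log0=0$). MW–MMW rounds for a fixed center $\hat\mu\in\mathbb R^p$: let $z_n=g_n-\hat\mu$, initial weights $w^{(1)}\in\Delta_{N,\epsilon}$, step sizes $\eta_w,\eta_\rho>0$, and $T\ge1$. For $t=1,\dots,T$: $S^{(t)}=\sum_n w^{(t)}_n z_nz_n^\top$; $\rho^{(t)}=\exp(\eta_\rho\sum_{t'=1}^t S^{(t')})/\mathrm{Tr}\exp(\eta_\rho\sum_{t'=1}^tS^{(t')})$; loss vector $m^{(t)}_n=z_n^\top\rho^{(t)}z_n$; $\tilde w^{(t)}_n=w^{(t)}_n(1-\eta_w m^{(t)}_n)$; $w^{(t+1)}=\arg\min_{w\in\Delta_{N,\epsilon}}\mathrm{RE}(w\|\tilde w^{(t)})$. *)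

theory Defs
  imports "HOL-Analysis.Analysis"
begin

text \<open>Matrices are real p x p matrices indexed by a finite type 'p; sample indices form a finite type 'n (N = CARD('n)).\<close>

definition mtrace :: "real^'p^'p \<Rightarrow> real" where
  "mtrace A = (\<Sum>i\<in>UNIV. A $ i $ i)"

definition frob_inner :: "real^'p^'p \<Rightarrow> real^'p^'p \<Rightarrow> real" where
  "frob_inner A B = mtrace (transpose A ** B)"

fun mpow :: "real^'p^'p \<Rightarrow> nat \<Rightarrow> real^'p^'p" where
  "mpow A 0 = mat 1"
| "mpow A (Suc k) = A ** mpow A k"

definition mexp :: "real^'p^'p \<Rightarrow> real^'p^'p" where
  "mexp A = (\<Sum>k. (1 / fact k) *\<^sub>R mpow A k)"

definition outer :: "real^'p \<Rightarrow> real^'p^'p" where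
  "outer x = (\<chi> i j. x $ i * x $ j)"

definition capped_simplex :: "real \<Rightarrow> (real^'n) set" where
  "capped_simplex \<epsilon> = {w. (\<Sum>n\<in>UNIV. w $ n) = 1 \<and>
      (\<forall>n. 0 \<le> w $ n \<and> w $ n \<le> 1 / ((1 - \<epsilon>) * real CARD('n)))}"

definition density_matrices :: "(real^'p^'p) set" where
  "density_matrices = {\<rho>. transpose \<rho> = \<rho> \<and> (\<forall>x. 0 \<le> x \<bullet> (\<rho> *v x)) \<and> mtrace \<rho> = 1}"

text \<open>Relative entropy; 0 log 0 = 0 holds since 0 * _ = 0.\<close>
definition RE :: "real^'n \<Rightarrow> real^'n \<Rightarrow> real" where
  "RE w v = (\<Sum>n\<in>UNIV. w $ n * ln (w $ n / v $ n))"

definition diam_sq :: "('n \<Rightarrow> real^'p) \<Rightarrow> real" where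
  "diam_sq g = Max {(norm (g i - g j))^2 | i j. True}"

definition S_mat :: "('n \<Rightarrow> real^'p) \<Rightarrow> real^'p \<Rightarrow> (nat \<Rightarrow> real^'n) \<Rightarrow> nat \<Rightarrow> real^'p^'p" where
  "S_mat g \<mu> w t = (\<Sum>n\<in>UNIV. (w t $ n) *\<^sub>R outer (g n - \<mu>))"

definition rho_mat :: "real \<Rightarrow> ('n \<Rightarrow> real^'p) \<Rightarrow> real^'p \<Rightarrow> (nat \<Rightarrow> real^'n) \<Rightarrow> nat \<Rightarrow> real^'p^'p" where
  "rho_mat \<eta>\<rho> g \<mu> w t =
     (let E = mexp (\<eta>\<rho> *\<^sub>R (\<Sum>t'\<in>{1..t}. S_mat g \<mu> w t')) in (1 / mtrace E) *\<^sub>R E)"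

definition loss :: "real \<Rightarrow> ('n \<Rightarrow> real^'p) \<Rightarrow> real^'p \<Rightarrow> (nat \<Rightarrow> real^'n) \<Rightarrow> nat \<Rightarrow> real^'n" where
  "loss \<eta>\<rho> g \<mu> w t = (\<chi> n. (g n - \<mu>) \<bullet> (rho_mat \<eta>\<rho> g \<mu> w t *v (g n - \<mu>)))"

definition w_tilde :: "real \<Rightarrow> real \<Rightarrow> ('n \<Rightarrow> real^'p) \<Rightarrow> real^'p \<Rightarrow> (nat \<Rightarrow> real^'n) \<Rightarrow> nat \<Rightarrow> real^'n" where
  "w_tilde \<eta>w \<eta>\<rho> g \<mu> w t = (\<chi> n. w t $ n * (1 - \<eta>w * loss \<eta>\<rho> g \<mu> w t $ n))"

definition mw_mmw_run :: "real \<Rightarrow> real \<Rightarrow> real \<Rightarrow> ('n \<Rightarrow> real^'p) \<Rightarrow> real^'p \<Rightarrow> nat \<Rightarrow> (nat \<Rightarrow> real^'n) \<Rightarrow> bool" where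
  "mw_mmw_run \<epsilon> \<eta>w \<eta>\<rho> g \<mu> T w \<longleftrightarrow>
     w 1 \<in> capped_simplex \<epsilon> \<and>
     (\<forall>t\<in>{1..T}. w (Suc t) \<in> capped_simplex \<epsilon> \<and>
        (\<forall>v\<in>capped_simplex \<epsilon>. RE (w (Suc t)) (w_tilde \<eta>w \<eta>\<rho> g \<mu> w t)
                                 \<le> RE v (w_tilde \<eta>w \<eta>\<rho> g \<mu> w t)))"

end

theory Submission
  imports Defs
begin

(* The matrix player runs matrix exponential weights with potential Phi(A) = ln tr exp A.
   Gibbs' variational inequality <Y, rho> <= Phi(Y) + sum_j r_j ln r_j (r the spectrum of rho)
   shows both that Phi dominates <_, rho> on density matrices and that Phi is convex with gradient
   the Gibbs state exp A / tr exp A.  As rho^(t) is the Gibbs state of a cumulative sum that already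
   contains S^(t), telescoping Phi gives sum_t <S^(t), rho> <= sum_t <S^(t), rho^(t)> + ln p / eta_rho.
   The weight player's relative-entropy projection onto the capped simplex is positive and satisfies
   the generalised Pythagorean inequality; together with ln (1 - x) >= - x - x^2 this gives
   eta_w sum_t <m^(t), w^(t)> <= RE(w || w^(1)) + eta_w (1 + eta_w nu) sum_t <m^(t), w>.
   The two bounds chain since <S^(t), rho^(t)> = <m^(t), w^(t)>; the losses lie in [0, nu] because
   the center lies in the convex hull of the g_n and Gibbs states have spectrum in [0, 1].  The
   factor 1 + eta_rho nu >= 1 only weakens the bound. *)

lemma linear_coeff_nonneg:
  fixes a b :: real
  assumes "\<And>s. 0 < s \<Longrightarrow> s \<le> 1 \<Longrightarrow> 0 \<le> s * a + s\<^sup>2 * b"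
  shows "0 \<le> a"
proof (rule ccontr)
  assume "\<not> 0 \<le> a"
  define s where "s = min 1 (- a / (2 * (\<bar>b\<bar> + 1)))"
  have s: "0 < s" "s \<le> 1" using \<open>\<not> 0 \<le> a\<close> by (auto simp: s_def divide_neg_pos)
  have "s * \<bar>b\<bar> \<le> - a / (2 * (\<bar>b\<bar> + 1)) * \<bar>b\<bar>"
    by (intro mult_right_mono) (auto simp: s_def)
  also have "\<dots> \<le> - a / 2" using \<open>\<not> 0 \<le> a\<close> by (simp add: field_simps)
  finally have "a + s * b < 0"
    using \<open>\<not> 0 \<le> a\<close> s abs_ge_self[of b] mult_left_mono[of b "\<bar>b\<bar>" s] by linarith
  then have "s * a + s\<^sup>2 * b < 0"
    using s mult_pos_neg[of s "a + s * b"] by (simp add: algebra_simps power2_eq_square)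
  then show False using assms[OF s] by simp
qed

lemma exp_weighted_sum_le:
  fixes c y :: "'a \<Rightarrow> real"
  assumes "finite S" "\<And>i. i \<in> S \<Longrightarrow> 0 \<le> c i" "(\<Sum>i\<in>S. c i) = 1"
  shows "exp (\<Sum>i\<in>S. c i * y i) \<le> (\<Sum>i\<in>S. c i * exp (y i))"
proof -
  have "S \<noteq> {}" using assms(3) by auto
  from convex_on_sum[OF assms(1) this exp_convex assms(3,2)] show ?thesis by simp
qed

lemma ln_one_minus_ge:
  fixes x :: real
  assumes "0 \<le> x" "x \<le> 1/2"
  shows "- x - x\<^sup>2 \<le> ln (1 - x)"
proof -
  define f where "f t = ln (1 - t) + t + t\<^sup>2" for t :: real
  define f' where "f' t = - 1 / (1 - t) + 1 + 2 * t" for t :: real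
  have "f 0 \<le> f x"
  proof (rule deriv_nonneg_imp_mono[of 0 x f f'])
    fix t assume t: "t \<in> {0..x}"
    then have "t < 1" using assms by simp
    show "(f has_real_derivative f' t) (at t)"
      unfolding f_def f'_def using \<open>t < 1\<close>
      by (auto intro!: derivative_eq_intros simp: power2_eq_square field_simps)
    have "f' t = t * (1 - 2 * t) / (1 - t)"
      using \<open>t < 1\<close> by (simp add: f'_def field_simps)
    moreover have "0 \<le> t * (1 - 2 * t)"
      using t assms by auto
    ultimately show "0 \<le> f' t"
      using \<open>t < 1\<close> by simp
  qed (use assms in simp)
  then show ?thesis by (simp add: f_def)
qed

lemma entropy_term_ge:
  fixes p c :: real
  assumes "0 \<le> p" "0 < c"
  shows "p - c \<le> p * ln (p / c)"
proof (cases "p = 0")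
  case False
  with assms have "0 < p" by simp
  have "ln (c / p) \<le> c / p - 1"
    using \<open>0 < p\<close> assms(2) by (intro ln_le_minus_one) simp
  moreover have "ln (p / c) = - ln (c / p)"
    using \<open>0 < p\<close> assms(2) by (simp add: ln_div)
  ultimately have "p * (1 - c / p) \<le> p * ln (p / c)"
    using \<open>0 < p\<close> by (intro mult_left_mono) auto
  moreover have "p * (1 - c / p) = p - c"
    using \<open>0 < p\<close> by (simp add: field_simps)
  ultimately show ?thesis by simp
qed (use assms in simp)

lemma entropy_term_increment_le:
  fixes x y c :: real
  assumes x: "0 < x" and y: "0 \<le> y" and c: "0 < c"
  shows "y * ln (y / c) - x * ln (x / c) \<le> (ln (x / c) + 1) * (y - x) + (y - x)\<^sup>2 / x"
proof (cases "y = 0")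
  case True
  then show ?thesis using x by (simp add: power2_eq_square field_simps)
next
  case False
  with y have "0 < y" by simp
  have "y * ln (y / x) \<le> y * (y / x - 1)"
    using \<open>0 < y\<close> x by (intro mult_left_mono ln_le_minus_one) auto
  moreover have "y * (y / x - 1) = (y - x) + (y - x)\<^sup>2 / x"
    using x by (simp add: power2_eq_square field_simps)
  moreover have "ln (y / c) = ln (y / x) + ln (x / c)"
    using x \<open>0 < y\<close> c by (simp add: ln_div)
  ultimately show ?thesis by (simp add: algebra_simps)
qed

lemma entropy_term_segment_le:
  fixes x y c s :: real
  assumes x: "0 < x" and y: "0 \<le> y" and c: "0 < c" and s: "0 \<le> s" "s \<le> 1"
  shows "(x + s * (y - x)) * ln ((x + s * (y - x)) / c) - x * ln (x / c)
    \<le> s * (\<bar>(y - x) * (ln (x / c) + 1)\<bar> + (y - x)\<^sup>2 / x)"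
proof -
  have "0 \<le> (1 - s) * x + s * y"
    using x y s by simp
  then have "(x + s * (y - x)) * ln ((x + s * (y - x)) / c) - x * ln (x / c)
      \<le> (ln (x / c) + 1) * (s * (y - x)) + (s * (y - x))\<^sup>2 / x"
    using entropy_term_increment_le[OF x _ c, of "x + s * (y - x)"] by (simp add: algebra_simps)
  also have "\<dots> = s * ((y - x) * (ln (x / c) + 1)) + s\<^sup>2 * ((y - x)\<^sup>2 / x)"
    by (simp add: power_mult_distrib mult_ac)
  also have "\<dots> \<le> s * \<bar>(y - x) * (ln (x / c) + 1)\<bar> + s * ((y - x)\<^sup>2 / x)"
    using s x by (intro add_mono mult_left_mono mult_right_mono) (auto simp: power2_eq_square mult_left_le_one_le)
  finally show ?thesis
    by (simp add: distrib_left)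
qed

lemma outer_component [simp]: "outer x $ i $ j = x $ i * x $ j"
  by (simp add: outer_def)

lemma transpose_outer [simp]: "transpose (outer x) = outer x"
  by (simp add: transpose_def outer_def vec_eq_iff mult.commute)

lemma outer_mult_vector: "outer x *v y = (x \<bullet> y) *\<^sub>R x"
  by (simp add: matrix_vector_mult_def vec_eq_iff inner_vec_def sum_distrib_left mult_ac)

lemma sum_matrix_mult_vector: "(\<Sum>i\<in>S. A i) *v x = (\<Sum>i\<in>S. A i *v x)"
  by (simp add: matrix_vector_mult_def vec_eq_iff sum_component sum_distrib_right) (intro allI sum.swap)

lemma matrix_vector_mult_sum: "A *v (\<Sum>i\<in>S. x i) = (\<Sum>i\<in>S. A *v x i)"
  by (simp add: matrix_vector_mult_def vec_eq_iff sum_component sum_distrib_left) (intro allI sum.swap)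

lemma combination_outer_mult_vector:
  "(\<Sum>i\<in>S. c i *\<^sub>R outer (v i)) *v x = (\<Sum>i\<in>S. (c i * (v i \<bullet> x)) *\<^sub>R v i)"
  by (simp add: sum_matrix_mult_vector outer_mult_vector scaleR_matrix_vector_assoc[symmetric])

lemma quadratic_form_combination_outer:
  "x \<bullet> ((\<Sum>i\<in>S. c i *\<^sub>R outer (v i)) *v x) = (\<Sum>i\<in>S. c i * (v i \<bullet> x)\<^sup>2)"
  by (simp add: combination_outer_mult_vector inner_sum_right power2_eq_square inner_commute mult_ac)

lemma inner_symmetric_matrix:
  fixes A :: "real^'n^'n"
  assumes "transpose A = A"
  shows "x \<bullet> (A *v y) = (A *v x) \<bullet> y"
  using dot_lmul_matrix[of x A y] vector_transpose_matrix[of x A] assms by simp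

lemma transpose_sum: "transpose (\<Sum>i\<in>S. A i) = (\<Sum>i\<in>S. transpose (A i))"
  by (simp add: transpose_def vec_eq_iff sum_component)

lemma mtrace_sum: "mtrace (\<Sum>i\<in>S. A i) = (\<Sum>i\<in>S. mtrace (A i))"
  unfolding mtrace_def by (simp add: sum_component) (rule sum.swap)

lemma mtrace_scaleR: "mtrace (c *\<^sub>R A) = c * mtrace A"
  by (simp add: mtrace_def sum_distrib_left)

lemma mtrace_outer: "mtrace (outer x) = x \<bullet> x"
  by (simp add: mtrace_def inner_vec_def)

lemma frob_inner_entrywise: "frob_inner A B = (\<Sum>i\<in>UNIV. \<Sum>j\<in>UNIV. A $ i $ j * B $ i $ j)"
  unfolding frob_inner_def mtrace_def
  by (simp add: matrix_matrix_mult_def transpose_def) (rule sum.swap)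

lemma frob_inner_commute: "frob_inner A B = frob_inner B A"
  by (simp add: frob_inner_entrywise mult.commute)

lemma frob_inner_sum_left: "frob_inner (\<Sum>i\<in>S. A i) B = (\<Sum>i\<in>S. frob_inner (A i) B)"
  unfolding frob_inner_entrywise by (simp add: sum_distrib_right sum_component sum.swap[of _ S UNIV])

lemma frob_inner_sum_right: "frob_inner B (\<Sum>i\<in>S. A i) = (\<Sum>i\<in>S. frob_inner B (A i))"
  by (simp add: frob_inner_commute[of B] frob_inner_sum_left)

lemma frob_inner_scaleR_left: "frob_inner (c *\<^sub>R A) B = c * frob_inner A B"
  unfolding frob_inner_entrywise by (simp add: sum_distrib_left mult_ac)

lemma frob_inner_scaleR_right: "frob_inner B (c *\<^sub>R A) = c * frob_inner B A"
  by (simp add: frob_inner_commute[of B] frob_inner_scaleR_left)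

lemma frob_inner_uminus_left: "frob_inner (- A) B = - frob_inner A B"
  unfolding frob_inner_entrywise by (simp add: sum_negf)

lemma frob_inner_diff_left: "frob_inner (A - C) B = frob_inner A B - frob_inner C B"
  unfolding frob_inner_entrywise by (simp add: left_diff_distrib sum_subtractf)

lemma frob_inner_outer_left: "frob_inner (outer x) A = x \<bullet> (A *v x)"
  unfolding frob_inner_entrywise
  by (simp add: inner_vec_def matrix_vector_mult_def sum_distrib_left mult_ac)

lemma frob_inner_outer_right: "frob_inner A (outer x) = x \<bullet> (A *v x)"
  by (simp add: frob_inner_commute[of A] frob_inner_outer_left)

lemma frob_inner_mat_1: "frob_inner A (mat 1) = mtrace A"
  by (simp add: frob_inner_entrywise mtrace_def mat_def if_distrib if_distribR cong: if_cong)

lemma mexp_zero: "mexp (0 :: real^'p^'p) = mat 1"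
proof -
  have "(\<lambda>k. (1 / fact k) *\<^sub>R mpow (0 :: real^'p^'p) k) = (\<lambda>k. if k = 0 then mat 1 else 0)"
  proof
    fix k show "(1 / fact k) *\<^sub>R mpow (0 :: real^'p^'p) k = (if k = 0 then mat 1 else 0)"
      by (cases k) simp_all
  qed
  then show ?thesis
    unfolding mexp_def using sums_single[of 0 "\<lambda>_. mat 1 :: real^'p^'p"] sums_unique by fastforce
qed

section \<open>Orthonormal frames and the spectral theorem\<close>

locale orthonormal_frame =
  fixes v :: "'p::finite \<Rightarrow> real^'p"
  assumes inner_frame: "v i \<bullet> v j = (if i = j then 1 else 0)"
begin

lemma expand: "(\<Sum>i\<in>UNIV. (v i \<bullet> x) *\<^sub>R v i) = x"
proof -
  have inj: "inj v"
    by (rule injI) (metis inner_frame zero_neq_one)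
  have orth: "pairwise orthogonal (range v)"
    by (auto simp: pairwise_def orthogonal_def inner_frame)
  have unit: "norm b = 1" if "b \<in> range v" for b
    using that inner_frame by (auto simp: norm_eq_1)
  have "0 \<notin> range v"
    by (metis inner_frame inner_zero_left rangeE zero_neq_one)
  then have "independent (range v)"
    by (rule pairwise_orthogonal_independent[OF orth])
  moreover have "card (range v) = dim (UNIV :: (real^'p) set)"
    using card_image[OF inj] by simp
  ultimately have "x \<in> span (range v)"
    using card_eq_dim[of "range v" UNIV] by auto
  then have "(\<Sum>b\<in>range v. (x \<bullet> b) *\<^sub>R b) = x"
    by (intro orthonormal_basis_expand[OF orth unit]) auto
  then show ?thesis
    by (simp add: sum.reindex[OF inj] inner_commute)
qed

lemma sum_outer: "(\<Sum>i\<in>UNIV. outer (v i)) = mat 1"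
  unfolding matrix_eq by (simp add: sum_matrix_mult_vector outer_mult_vector expand)

lemma parseval: "(\<Sum>i\<in>UNIV. (v i \<bullet> x)\<^sup>2) = x \<bullet> x"
proof -
  have "x \<bullet> x = x \<bullet> (\<Sum>i\<in>UNIV. (v i \<bullet> x) *\<^sub>R v i)"
    by (simp add: expand)
  then show ?thesis
    by (simp add: inner_sum_right power2_eq_square inner_commute)
qed

lemma mtrace_eq_sum_quadratic_form: "mtrace A = (\<Sum>i\<in>UNIV. v i \<bullet> (A *v v i))"
  using frob_inner_mat_1[of A] by (simp add: sum_outer[symmetric] frob_inner_sum_right frob_inner_outer_right)

lemma combination_mult_frame: "(\<Sum>i\<in>UNIV. c i *\<^sub>R outer (v i)) *v v j = c j *\<^sub>R v j"
  by (simp add: combination_outer_mult_vector inner_frame if_distrib if_distribR cong: if_cong)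

lemma combination_mult:
  "(\<Sum>i\<in>UNIV. c i *\<^sub>R outer (v i)) ** (\<Sum>i\<in>UNIV. d i *\<^sub>R outer (v i))
     = (\<Sum>i\<in>UNIV. (c i * d i) *\<^sub>R outer (v i))"
  unfolding matrix_eq
  by (simp add: matrix_vector_mul_assoc[symmetric] combination_outer_mult_vector
      inner_sum_right inner_frame if_distrib if_distribR mult_ac cong: if_cong)

lemma mtrace_combination: "mtrace (\<Sum>i\<in>UNIV. c i *\<^sub>R outer (v i)) = (\<Sum>i\<in>UNIV. c i)"
  by (simp add: mtrace_sum mtrace_scaleR mtrace_outer inner_frame)

lemma mpow_combination: "mpow (\<Sum>i\<in>UNIV. c i *\<^sub>R outer (v i)) k = (\<Sum>i\<in>UNIV. c i ^ k *\<^sub>R outer (v i))"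
  by (induction k) (simp_all add: sum_outer combination_mult)

lemma mexp_combination: "mexp (\<Sum>i\<in>UNIV. c i *\<^sub>R outer (v i)) = (\<Sum>i\<in>UNIV. exp (c i) *\<^sub>R outer (v i))"
proof -
  have "(\<lambda>k. (1 / fact k) *\<^sub>R mpow (\<Sum>i\<in>UNIV. c i *\<^sub>R outer (v i)) k)
      = (\<lambda>k. \<Sum>i\<in>UNIV. (c i ^ k /\<^sub>R fact k) *\<^sub>R outer (v i))"
    by (simp add: mpow_combination scaleR_sum_right divide_inverse mult_ac)
  moreover have "(\<lambda>k. \<Sum>i\<in>UNIV. (c i ^ k /\<^sub>R fact k) *\<^sub>R outer (v i))
      sums (\<Sum>i\<in>UNIV. exp (c i) *\<^sub>R outer (v i))"
    by (intro sums_sum sums_scaleR_left exp_converges)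
  ultimately show ?thesis
    unfolding mexp_def by (simp add: sums_unique[symmetric])
qed

end

locale spectral_decomposition =
  fixes X :: "real^'p::finite^'p" and v :: "'p \<Rightarrow> real^'p" and l :: "'p \<Rightarrow> real"
  assumes frame: "orthonormal_frame v"
    and decomposition: "X = (\<Sum>i\<in>UNIV. l i *\<^sub>R outer (v i))"

sublocale spectral_decomposition \<subseteq> orthonormal_frame v
  by (rule frame)

context spectral_decomposition
begin

lemma eigenvector: "X *v v j = l j *\<^sub>R v j"
  by (simp add: decomposition combination_mult_frame)

lemma eigenvalue: "v j \<bullet> (X *v v j) = l j"
  by (simp add: eigenvector inner_frame)

lemma quadratic_form: "x \<bullet> (X *v x) = (\<Sum>i\<in>UNIV. l i * (v i \<bullet> x)\<^sup>2)"
  by (simp add: decomposition quadratic_form_combination_outer)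

lemma mtrace_eq: "mtrace X = (\<Sum>i\<in>UNIV. l i)"
  by (simp add: decomposition mtrace_combination)

lemma mexp_eq: "mexp X = (\<Sum>i\<in>UNIV. exp (l i) *\<^sub>R outer (v i))"
  by (simp add: decomposition mexp_combination)

lemma mtrace_mexp: "mtrace (mexp X) = (\<Sum>i\<in>UNIV. exp (l i))"
  by (simp add: mexp_eq mtrace_combination)

text \<open>Jensen's inequality for the spectral measure of a unit vector.\<close>
lemma exp_quadratic_form_le:
  assumes "e \<bullet> e = 1"
  shows "exp (e \<bullet> (X *v e)) \<le> e \<bullet> (mexp X *v e)"
proof -
  have "(\<Sum>i\<in>UNIV. (v i \<bullet> e)\<^sup>2) = 1"
    using parseval[of e] assms by simp
  then have "exp (\<Sum>i\<in>UNIV. (v i \<bullet> e)\<^sup>2 * l i) \<le> (\<Sum>i\<in>UNIV. (v i \<bullet> e)\<^sup>2 * exp (l i))"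
    by (intro exp_weighted_sum_le) auto
  then show ?thesis
    by (simp add: quadratic_form mexp_eq quadratic_form_combination_outer mult.commute)
qed

end

lemma rayleigh_maximizer_eigenvector:
  fixes X :: "real^'p^'p"
  assumes sym: "transpose X = X" and V: "subspace V" and invariant: "\<And>y. y \<in> V \<Longrightarrow> X *v y \<in> V"
    and e: "e \<in> V" "e \<bullet> e = 1" and max: "\<And>y. y \<in> V \<Longrightarrow> y \<bullet> (X *v y) \<le> (e \<bullet> (X *v e)) * (y \<bullet> y)"
  shows "X *v e = (e \<bullet> (X *v e)) *\<^sub>R e"
proof -
  define lam where "lam = e \<bullet> (X *v e)"
  define r where "r = X *v e - lam *\<^sub>R e"
  have "r \<in> V"
    unfolding r_def using V e invariant by (intro subspace_diff subspace_scale) auto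
  (* maximality of e tested in the direction r *)
  have perturbed: "0 \<le> s * (- 2 * (r \<bullet> r)) + s\<^sup>2 * (lam * (r \<bullet> r) - r \<bullet> (X *v r))" for s
  proof -
    have "e + s *\<^sub>R r \<in> V"
      using V e \<open>r \<in> V\<close> by (simp add: subspace_add subspace_scale)
    have quadratic: "(e + s *\<^sub>R r) \<bullet> (X *v (e + s *\<^sub>R r))
        = e \<bullet> (X *v e) + s * (e \<bullet> (X *v r)) + s * (r \<bullet> (X *v e)) + s * s * (r \<bullet> (X *v r))"
      by (simp add: matrix_vector_right_distrib matrix_vector_mult_scaleR inner_add_left inner_add_right
          distrib_left)
    have norm: "(e + s *\<^sub>R r) \<bullet> (e + s *\<^sub>R r) = 1 + 2 * s * (r \<bullet> e) + s * s * (r \<bullet> r)"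
      by (simp add: inner_add_left inner_add_right e inner_commute[of e r] distrib_left)
    have "e \<bullet> (X *v e) + s * (e \<bullet> (X *v r)) + s * (r \<bullet> (X *v e)) + s * s * (r \<bullet> (X *v r))
        \<le> lam * (1 + 2 * s * (r \<bullet> e) + s * s * (r \<bullet> r))"
      using max[OF \<open>e + s *\<^sub>R r \<in> V\<close>] unfolding quadratic norm lam_def .
    moreover have "e \<bullet> (X *v r) = r \<bullet> (X *v e)"
      using inner_symmetric_matrix[OF sym, of e r] by (simp add: inner_commute)
    moreover have "r \<bullet> (X *v e) = r \<bullet> r + lam * (r \<bullet> e)"
      by (simp add: r_def inner_diff_right)
    moreover have "e \<bullet> (X *v e) = lam"
      by (simp add: lam_def)
    ultimately show ?thesis
      by (simp add: power2_eq_square algebra_simps)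
  qed
  have "0 \<le> - 2 * (r \<bullet> r)"
    by (rule linear_coeff_nonneg) (rule perturbed)
  then have "r \<bullet> r = 0"
    using inner_ge_zero[of r] by linarith
  then show ?thesis
    by (simp add: r_def lam_def)
qed

lemma symmetric_matrix_eigenvector_in_invariant_subspace:
  fixes X :: "real^'p^'p"
  assumes sym: "transpose X = X" and V: "subspace V" "x \<in> V" "x \<noteq> 0"
    and invariant: "\<And>y. y \<in> V \<Longrightarrow> X *v y \<in> V"
  obtains e c where "e \<in> V" "e \<bullet> e = 1" "X *v e = c *\<^sub>R e"
proof -
  define K where "K = V \<inter> sphere 0 1"
  have "compact K"
    unfolding K_def by (intro closed_Int_compact closed_subspace V compact_sphere)
  moreover have "x /\<^sub>R norm x \<in> K"
    using V by (auto simp: K_def subspace_scale)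
  moreover have "continuous_on K (\<lambda>y. y \<bullet> (X *v y))"
    by (intro continuous_intros linear_continuous_on matrix_vector_mul_bounded_linear)
  ultimately obtain e where "e \<in> K" and max: "\<forall>y\<in>K. y \<bullet> (X *v y) \<le> e \<bullet> (X *v e)"
    using continuous_attains_sup[of K "\<lambda>y. y \<bullet> (X *v y)"] by blast
  then have e: "e \<in> V" "e \<bullet> e = 1"
    by (auto simp: K_def norm_eq_1)
  have "y \<bullet> (X *v y) \<le> (e \<bullet> (X *v e)) * (y \<bullet> y)" if "y \<in> V" for y
  proof (cases "y = 0")
    case False
    then have "y /\<^sub>R norm y \<in> K"
      using that V by (auto simp: K_def subspace_scale)
    then have "(y /\<^sub>R norm y) \<bullet> (X *v (y /\<^sub>R norm y)) \<le> e \<bullet> (X *v e)"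
      using max by blast
    moreover have "(y /\<^sub>R norm y) \<bullet> (X *v (y /\<^sub>R norm y)) = (y \<bullet> (X *v y)) / (norm y)\<^sup>2"
      by (simp add: matrix_vector_mult_scaleR power2_eq_square divide_inverse mult_ac)
    ultimately show ?thesis
      using False by (simp add: divide_le_eq power2_norm_eq_inner mult.commute)
  qed simp
  with rayleigh_maximizer_eigenvector[OF sym V(1) invariant e] e that show ?thesis
    by blast
qed

lemma symmetric_matrix_orthonormal_eigenvectors:
  fixes X :: "real^'p^'p"
  assumes sym: "transpose X = X"
  shows "k \<le> CARD('p) \<Longrightarrow> \<exists>B. finite B \<and> card B = k \<and>
    (\<forall>b\<in>B. \<forall>b'\<in>B. b \<bullet> b' = (if b = b' then 1 else 0)) \<and> (\<forall>b\<in>B. \<exists>c. X *v b = c *\<^sub>R b)"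
proof (induction k)
  case 0
  show ?case by (intro exI[of _ "{}"]) simp
next
  case (Suc k)
  then obtain B where fin: "finite B" and card: "card B = k"
    and orthonormal: "\<forall>b\<in>B. \<forall>b'\<in>B. b \<bullet> b' = (if b = b' then 1 else 0)"
    and eigen: "\<forall>b\<in>B. \<exists>c. X *v b = c *\<^sub>R b"
    by auto
  define V where "V = {x. \<forall>b\<in>B. x \<bullet> b = 0}"
  have "dim B < DIM(real^'p)"
    using dim_le_card[OF span_superset fin] card Suc.prems by simp
  then obtain x where "x \<noteq> 0" and "\<And>y. y \<in> span B \<Longrightarrow> orthogonal x y"
    using orthogonal_to_subspace_exists by blast
  then have "x \<in> V"
    by (auto simp: V_def orthogonal_def span_base)
  moreover have "subspace V"
    by (auto simp: V_def subspace_def inner_add_left)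
  moreover have invariant: "X *v y \<in> V" if "y \<in> V" for y
  proof -
    have "(X *v y) \<bullet> b = 0" if "b \<in> B" for b
    proof -
      obtain c where "X *v b = c *\<^sub>R b" using eigen \<open>b \<in> B\<close> by blast
      then show ?thesis
        using inner_symmetric_matrix[OF sym, of y b] \<open>y \<in> V\<close> \<open>b \<in> B\<close> by (simp add: V_def)
    qed
    then show ?thesis by (simp add: V_def)
  qed
  ultimately obtain e c where e: "e \<in> V" "e \<bullet> e = 1" "X *v e = c *\<^sub>R e"
    using symmetric_matrix_eigenvector_in_invariant_subspace[OF sym _ _ \<open>x \<noteq> 0\<close>] by blast
  then have "e \<notin> B"
    by (auto simp: V_def)
  show ?case
  proof (intro exI conjI)
    show "finite (insert e B)" "card (insert e B) = Suc k"
      using fin card \<open>e \<notin> B\<close> by simp_all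
    show "\<forall>b\<in>insert e B. \<forall>b'\<in>insert e B. b \<bullet> b' = (if b = b' then 1 else 0)"
      using orthonormal e \<open>e \<notin> B\<close> by (auto simp: V_def inner_commute)
    show "\<forall>b\<in>insert e B. \<exists>c. X *v b = c *\<^sub>R b"
      using eigen e by auto
  qed
qed

theorem spectral_theorem:
  fixes X :: "real^'p^'p"
  assumes sym: "transpose X = X"
  obtains v l where "spectral_decomposition X v l"
proof -
  obtain B where fin: "finite B" and card: "card B = CARD('p)"
    and orthonormal: "\<forall>b\<in>B. \<forall>b'\<in>B. b \<bullet> b' = (if b = b' then 1 else 0)"
    and eigen: "\<forall>b\<in>B. \<exists>c. X *v b = c *\<^sub>R b"
    using symmetric_matrix_orthonormal_eigenvectors[OF sym, of "CARD('p)"] by auto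
  obtain v where v: "bij_betw v (UNIV :: 'p set) B"
    using finite_same_card_bij[of "UNIV :: 'p set" B] fin card by auto
  have vB: "v i \<in> B" for i
    using v by (auto simp: bij_betw_def)
  have "v i \<bullet> v j = (if i = j then 1 else 0)" for i j
    using orthonormal vB[of i] vB[of j] bij_betw_imp_inj_on[OF v] by (auto simp: inj_eq)
  then interpret orthonormal_frame v
    by unfold_locales
  define l where "l i = v i \<bullet> (X *v v i)" for i
  have eigen_v: "X *v v i = l i *\<^sub>R v i" for i
  proof -
    obtain c where "X *v v i = c *\<^sub>R v i" using eigen vB by blast
    then show ?thesis by (simp add: l_def inner_frame)
  qed
  have "X = (\<Sum>i\<in>UNIV. l i *\<^sub>R outer (v i))"
    unfolding matrix_eq
  proof
    fix x
    have "X *v x = X *v (\<Sum>i\<in>UNIV. (v i \<bullet> x) *\<^sub>R v i)"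
      by (simp add: expand)
    also have "\<dots> = (\<Sum>i\<in>UNIV. (l i * (v i \<bullet> x)) *\<^sub>R v i)"
      by (simp add: matrix_vector_mult_sum matrix_vector_mult_scaleR eigen_v mult.commute)
    finally show "X *v x = (\<Sum>i\<in>UNIV. l i *\<^sub>R outer (v i)) *v x"
      by (simp add: combination_outer_mult_vector)
  qed
  then show ?thesis
    by (intro that[of v]) (simp add: spectral_decomposition_def orthonormal_frame_axioms)
qed

section \<open>The log-trace-exp potential and Gibbs states\<close>

definition log_trace_exp :: "real^'p^'p \<Rightarrow> real" where
  "log_trace_exp X = ln (mtrace (mexp X))"

definition gibbs_state :: "real^'p^'p \<Rightarrow> real^'p^'p" where
  "gibbs_state X = (1 / mtrace (mexp X)) *\<^sub>R mexp X"

lemma log_trace_exp_zero: "log_trace_exp (0 :: real^'p^'p) = ln (real CARD('p))"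
  by (simp add: log_trace_exp_def mexp_zero mtrace_def mat_def)

lemma (in spectral_decomposition) gibbs_state_decomposition:
  "spectral_decomposition (gibbs_state X) v (\<lambda>j. exp (l j) / (\<Sum>i\<in>UNIV. exp (l i)))"
  using frame by (simp add: spectral_decomposition_def gibbs_state_def mexp_eq mtrace_combination scaleR_sum_right)

text \<open>Gibbs' variational inequality: the entropy term is the negative von Neumann entropy of \<open>\<rho>\<close>.\<close>
lemma gibbs_variational_inequality:
  fixes Y \<rho> :: "real^'p^'p"
  assumes sym: "transpose Y = Y" and \<rho>: "spectral_decomposition \<rho> w r"
    and r: "\<And>j. 0 \<le> r j" "(\<Sum>j\<in>UNIV. r j) = 1"
  shows "frob_inner Y \<rho> \<le> log_trace_exp Y + (\<Sum>j\<in>UNIV. r j * ln (r j))"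
proof -
  obtain u y where "spectral_decomposition Y u y"
    using spectral_theorem[OF sym] .
  interpret Y: spectral_decomposition Y u y by fact
  interpret \<rho>: spectral_decomposition \<rho> w r by (rule \<rho>)
  define q where "q j = w j \<bullet> (Y *v w j)" for j
  define a where "a j = w j \<bullet> (mexp Y *v w j)" for j
  have qa: "exp (q j) \<le> a j" for j
    unfolding q_def a_def by (rule Y.exp_quadratic_form_le) (simp add: \<rho>.inner_frame)
  have "exp (\<Sum>j\<in>UNIV. r j * (q j - ln (r j))) \<le> (\<Sum>j\<in>UNIV. r j * exp (q j - ln (r j)))"
    by (rule exp_weighted_sum_le) (use r in auto)
  also have "\<dots> \<le> (\<Sum>j\<in>UNIV. a j)"
  proof (rule sum_mono)
    fix j
    show "r j * exp (q j - ln (r j)) \<le> a j"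
    proof (cases "r j = 0")
      case True
      have "0 \<le> a j" using qa[of j] exp_gt_zero[of "q j"] by linarith
      with True show ?thesis by simp
    next
      case False
      then have "0 < r j" using r(1)[of j] by simp
      then show ?thesis using qa[of j] by (simp add: exp_diff)
    qed
  qed
  also have "(\<Sum>j\<in>UNIV. a j) = mtrace (mexp Y)"
    unfolding a_def by (rule \<rho>.mtrace_eq_sum_quadratic_form[symmetric])
  finally have "(\<Sum>j\<in>UNIV. r j * (q j - ln (r j))) \<le> log_trace_exp Y"
    unfolding log_trace_exp_def using ln_ge_iff exp_gt_zero less_le_trans by metis
  moreover have "frob_inner Y \<rho> = (\<Sum>j\<in>UNIV. r j * q j)"
    by (simp add: \<rho>.decomposition frob_inner_sum_right frob_inner_scaleR_right frob_inner_outer_right q_def)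
  ultimately show ?thesis
    by (simp add: right_diff_distrib sum_subtractf)
qed

lemma frob_inner_le_log_trace_exp:
  fixes X \<rho> :: "real^'p^'p"
  assumes sym: "transpose X = X" and \<rho>: "\<rho> \<in> density_matrices"
  shows "frob_inner X \<rho> \<le> log_trace_exp X"
proof -
  have "transpose \<rho> = \<rho>"
    using \<rho> by (simp add: density_matrices_def)
  then obtain w r where dec: "spectral_decomposition \<rho> w r"
    by (rule spectral_theorem)
  interpret spectral_decomposition \<rho> w r by (rule dec)
  have r_nonneg: "0 \<le> r j" for j
  proof -
    have "0 \<le> w j \<bullet> (\<rho> *v w j)"
      using \<rho> by (simp add: density_matrices_def)
    then show ?thesis by (simp add: eigenvalue)
  qed
  have r_sum: "(\<Sum>j\<in>UNIV. r j) = 1"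
    using \<rho> mtrace_eq by (simp add: density_matrices_def)
  have "r j * ln (r j) \<le> 0" for j
  proof -
    have "r j \<le> 1"
      using member_le_sum[of j UNIV r] r_nonneg r_sum by simp
    then have "ln (r j) \<le> 0"
      using r_nonneg[of j] by (cases "r j = 0") simp_all
    then show ?thesis
      using r_nonneg[of j] by (simp add: mult_nonneg_nonpos)
  qed
  then have "(\<Sum>j\<in>UNIV. r j * ln (r j)) \<le> 0"
    by (simp add: sum_nonpos)
  then show ?thesis
    using gibbs_variational_inequality[OF sym dec r_nonneg r_sum] by linarith
qed

lemma log_trace_exp_subgradient:
  fixes X Y :: "real^'p^'p"
  assumes symX: "transpose X = X" and symY: "transpose Y = Y"
  shows "frob_inner (Y - X) (gibbs_state X) \<le> log_trace_exp Y - log_trace_exp X"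
proof -
  obtain v x where "spectral_decomposition X v x"
    using spectral_theorem[OF symX] .
  interpret spectral_decomposition X v x by fact
  define Z where "Z = (\<Sum>i\<in>UNIV. exp (x i))"
  define r where "r = (\<lambda>j. exp (x j) / Z)"
  have Z: "0 < Z" by (simp add: Z_def sum_pos)
  have dec: "spectral_decomposition (gibbs_state X) v r"
    using gibbs_state_decomposition by (simp add: r_def Z_def)
  have r_nonneg: "0 \<le> r j" for j
    using Z by (simp add: r_def)
  have r_sum: "(\<Sum>j\<in>UNIV. r j) = 1"
    using Z by (simp add: r_def Z_def flip: sum_divide_distrib)
  have "frob_inner X (gibbs_state X) = (\<Sum>j\<in>UNIV. r j * x j)"
    by (simp add: spectral_decomposition.decomposition[OF dec] frob_inner_sum_right
        frob_inner_scaleR_right frob_inner_outer_right eigenvalue)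
  also have "\<dots> = (\<Sum>j\<in>UNIV. r j * ln (r j)) + ln Z"
  proof -
    have "ln (r j) = x j - ln Z" for j
      using Z by (simp add: r_def ln_div)
    then show ?thesis
      by (simp add: right_diff_distrib sum_subtractf sum_distrib_right[symmetric] r_sum)
  qed
  also have "ln Z = log_trace_exp X"
    by (simp add: log_trace_exp_def mtrace_mexp Z_def)
  finally show ?thesis
    using gibbs_variational_inequality[OF symY dec r_nonneg r_sum]
    by (simp add: frob_inner_diff_left)
qed

lemma gibbs_state_quadratic_form_bounds:
  fixes X :: "real^'p^'p"
  assumes "transpose X = X"
  shows "0 \<le> z \<bullet> (gibbs_state X *v z)" and "z \<bullet> (gibbs_state X *v z) \<le> z \<bullet> z"
proof -
  obtain v x where "spectral_decomposition X v x"
    using spectral_theorem[OF assms] .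
  interpret spectral_decomposition X v x by fact
  define Z where "Z = (\<Sum>i\<in>UNIV. exp (x i))"
  have Z: "0 < Z" by (simp add: Z_def sum_pos)
  have weight_le_1: "exp (x j) / Z \<le> 1" for j
    using member_le_sum[of j UNIV "\<lambda>i. exp (x i)"] Z by (simp add: Z_def)
  have quadratic: "z \<bullet> (gibbs_state X *v z) = (\<Sum>j\<in>UNIV. exp (x j) / Z * (v j \<bullet> z)\<^sup>2)"
    using spectral_decomposition.quadratic_form[OF gibbs_state_decomposition] by (simp add: Z_def)
  show "0 \<le> z \<bullet> (gibbs_state X *v z)"
    unfolding quadratic using Z by (intro sum_nonneg) simp
  have "(\<Sum>j\<in>UNIV. exp (x j) / Z * (v j \<bullet> z)\<^sup>2) \<le> (\<Sum>j\<in>UNIV. (v j \<bullet> z)\<^sup>2)"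
    by (intro sum_mono mult_left_le_one_le) (auto simp: weight_le_1 Z less_imp_le)
  then show "z \<bullet> (gibbs_state X *v z) \<le> z \<bullet> z"
    unfolding quadratic parseval .
qed

section \<open>Regret of matrix exponential weights\<close>

text \<open>The Gibbs state at round \<open>t\<close> already includes the loss \<open>S t\<close> of that round, so the
  potential argument needs no second-order term.\<close>
lemma matrix_exponential_weights_regret:
  fixes S :: "nat \<Rightarrow> real^'p^'p" and \<rho> :: "real^'p^'p"
  assumes sym: "\<And>t. transpose (S t) = S t" and \<eta>: "0 < \<eta>" and \<rho>: "\<rho> \<in> density_matrices"
  shows "(\<Sum>t=1..T. frob_inner (S t) \<rho>)
    \<le> (\<Sum>t=1..T. frob_inner (S t) (gibbs_state (\<eta> *\<^sub>R (\<Sum>t'=1..t. S t')))) + ln (real CARD('p)) / \<eta>"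
proof -
  define A where "A t = \<eta> *\<^sub>R (\<Sum>t'=1..t. S t')" for t
  have symA: "transpose (A t) = A t" for t
    by (simp add: A_def transpose_scalar transpose_sum sym)
  have step: "log_trace_exp (A (Suc t)) - log_trace_exp (A t)
      \<le> \<eta> * frob_inner (S (Suc t)) (gibbs_state (A (Suc t)))" for t
  proof -
    have "A (Suc t) = A t + \<eta> *\<^sub>R S (Suc t)"
      by (simp add: A_def scaleR_add_right)
    then show ?thesis
      using log_trace_exp_subgradient[OF symA[of "Suc t"] symA[of t]]
      by (simp add: frob_inner_uminus_left frob_inner_scaleR_left)
  qed
  have potential: "log_trace_exp (A k) \<le> ln (real CARD('p)) + \<eta> * (\<Sum>t=1..k. frob_inner (S t) (gibbs_state (A t)))" for k
  proof (induction k)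
    case 0
    then show ?case by (simp add: A_def log_trace_exp_zero)
  next
    case (Suc k)
    then show ?case using step[of k] by (simp add: distrib_left)
  qed
  have "\<eta> * (\<Sum>t=1..T. frob_inner (S t) \<rho>) = frob_inner (A T) \<rho>"
    by (simp add: A_def frob_inner_scaleR_left frob_inner_sum_left)
  also have "\<dots> \<le> log_trace_exp (A T)"
    by (rule frob_inner_le_log_trace_exp[OF symA \<rho>])
  also have "\<dots> \<le> \<eta> * ((\<Sum>t=1..T. frob_inner (S t) (gibbs_state (A t))) + ln (real CARD('p)) / \<eta>)"
    using potential[of T] \<eta> by (simp add: distrib_left)
  finally show ?thesis
    using \<eta> by (simp add: A_def)
qed

section \<open>Relative-entropy projections onto the capped simplex\<close>

lemma capped_simplexD:
  fixes w :: "real^'n"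
  assumes "w \<in> capped_simplex \<epsilon>"
  shows "(\<Sum>n\<in>UNIV. w $ n) = 1" and "0 \<le> w $ n"
    and "w $ n \<le> 1 / ((1 - \<epsilon>) * real CARD('n))"
  using assms by (simp_all add: capped_simplex_def)

lemma convex_capped_simplex: "convex (capped_simplex \<epsilon>)"
proof (rule convexI)
  fix x y :: "real^'n" and a b :: real
  assume x: "x \<in> capped_simplex \<epsilon>" and y: "y \<in> capped_simplex \<epsilon>"
    and ab: "0 \<le> a" "0 \<le> b" "a + b = 1"
  have "(\<Sum>n\<in>UNIV. a * x $ n + b * y $ n) = 1"
    using capped_simplexD(1)[OF x] capped_simplexD(1)[OF y] ab
    by (simp add: sum.distrib flip: sum_distrib_left)
  moreover have "0 \<le> a * x $ n + b * y $ n" for n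
    using capped_simplexD(2)[OF x] capped_simplexD(2)[OF y] ab by simp
  moreover have "a * x $ n + b * y $ n \<le> 1 / ((1 - \<epsilon>) * real CARD('n))" for n
    using capped_simplexD(3)[OF x] capped_simplexD(3)[OF y] ab by (intro convex_bound_le)
  ultimately show "a *\<^sub>R x + b *\<^sub>R y \<in> capped_simplex \<epsilon>"
    by (simp add: capped_simplex_def)
qed

lemma uniform_in_capped_simplex:
  assumes "0 \<le> \<epsilon>" "\<epsilon> < 1"
  shows "((\<chi> n. 1 / real CARD('n)) :: real^'n) \<in> capped_simplex \<epsilon>"
proof -
  have "(1 - \<epsilon>) * real CARD('n) \<le> 1 * real CARD('n)" "0 < (1 - \<epsilon>) * real CARD('n)"
    using assms by (intro mult_right_mono mult_pos_pos; simp)+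
  then have "1 / real CARD('n) \<le> 1 / ((1 - \<epsilon>) * real CARD('n))"
    by (intro frac_le) auto
  then show ?thesis by (simp add: capped_simplex_def)
qed

lemma RE_nonneg:
  fixes u p :: "real^'n"
  assumes "\<And>n. 0 \<le> u $ n" "\<And>n. 0 < p $ n" "(\<Sum>n\<in>UNIV. u $ n) = (\<Sum>n\<in>UNIV. p $ n)"
  shows "0 \<le> RE u p"
proof -
  have "(\<Sum>n\<in>UNIV. u $ n - p $ n) \<le> RE u p"
    unfolding RE_def using assms by (intro sum_mono entropy_term_ge) auto
  then show ?thesis
    using assms(3) by (simp add: sum_subtractf)
qed

lemma RE_uniform_le:
  fixes u :: "real^'n"
  assumes \<epsilon>: "0 \<le> \<epsilon>" "\<epsilon> < 1" and u: "u \<in> capped_simplex \<epsilon>"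
  shows "RE u (\<chi> n. 1 / real CARD('n)) \<le> ln (1 / (1 - \<epsilon>))"
proof -
  have "u $ n * ln (u $ n * real CARD('n)) \<le> u $ n * ln (1 / (1 - \<epsilon>))" for n
  proof (cases "u $ n = 0")
    case False
    then have "0 < u $ n" using capped_simplexD(2)[OF u, of n] by simp
    moreover have "u $ n * real CARD('n) \<le> 1 / ((1 - \<epsilon>) * real CARD('n)) * real CARD('n)"
      using capped_simplexD(3)[OF u, of n] by (intro mult_right_mono) auto
    ultimately have "0 < u $ n * real CARD('n)" "u $ n * real CARD('n) \<le> 1 / (1 - \<epsilon>)"
      by simp_all
    then show ?thesis
      using \<open>0 < u $ n\<close> \<epsilon> by (intro mult_left_mono) auto
  qed simp
  then have "RE u (\<chi> n. 1 / real CARD('n)) \<le> (\<Sum>n\<in>UNIV. u $ n * ln (1 / (1 - \<epsilon>)))"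
    unfolding RE_def by (intro sum_mono) simp
  also have "\<dots> = ln (1 / (1 - \<epsilon>))"
    using capped_simplexD(1)[OF u] by (simp flip: sum_distrib_right)
  finally show ?thesis .
qed

definition RE_projection :: "real \<Rightarrow> real^'n \<Rightarrow> real^'n \<Rightarrow> bool" where
  "RE_projection \<epsilon> c p \<longleftrightarrow> p \<in> capped_simplex \<epsilon> \<and> (\<forall>q\<in>capped_simplex \<epsilon>. RE p c \<le> RE q c)"

text \<open>Moving from \<open>p\<close> towards the uniform vector decreases the entropy at rate \<open>ln s\<close> in
  every coordinate where \<open>p\<close> vanishes, which beats the bounded first-order change elsewhere.\<close>
lemma RE_towards_uniform_le:
  fixes c p :: "real^'n"
  assumes c: "\<And>n. 0 < c $ n" and p: "p \<in> capped_simplex \<epsilon>" and pk: "p $ k = 0"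
  obtains K where "0 \<le> K" and "\<And>s. 0 < s \<Longrightarrow> s \<le> 1 \<Longrightarrow>
    RE ((1 - s) *\<^sub>R p + s *\<^sub>R (\<chi> n. 1 / real CARD('n))) c - RE p c
      \<le> s * K + s / real CARD('n) * ln s"
proof -
  define N where "N = real CARD('n)"
  have N: "0 < N" by (simp add: N_def)
  define u :: "real^'n" where "u = (\<chi> n. 1 / N)"
  define M where "M n = (if 0 < p $ n
      then \<bar>(u $ n - p $ n) * (ln (p $ n / c $ n) + 1)\<bar> + (u $ n - p $ n)\<^sup>2 / p $ n
      else \<bar>ln (N * c $ n)\<bar> / N)" for n
  have "0 \<le> (\<Sum>n\<in>UNIV. M n)"
    using N by (intro sum_nonneg) (simp add: M_def)
  moreover have "RE ((1 - s) *\<^sub>R p + s *\<^sub>R u) c - RE p c \<le> s * (\<Sum>n\<in>UNIV. M n) + s / N * ln s"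
    if s: "0 < s" "s \<le> 1" for s
  proof -
    define q where "q = (1 - s) *\<^sub>R p + s *\<^sub>R u"
    have increment: "q $ n * ln (q $ n / c $ n) - p $ n * ln (p $ n / c $ n)
        \<le> s * M n + (if n = k then s / N * ln s else 0)" for n
    proof (cases "0 < p $ n")
      case True
      have "q $ n = p $ n + s * (u $ n - p $ n)"
        by (simp add: q_def algebra_simps)
      then show ?thesis
        using entropy_term_segment_le[OF True _ c, of "u $ n" s] s True pk N
        by (auto simp: M_def u_def)
    next
      case False
      then have "p $ n = 0" using capped_simplexD(2)[OF p, of n] by simp
      then have "q $ n = s / N" by (simp add: q_def u_def)
      then have "q $ n * ln (q $ n / c $ n) = s / N * ln s - s / N * ln (N * c $ n)"
        using s N c[of n] by (simp add: ln_div ln_mult right_diff_distrib)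
      also have "\<dots> \<le> s / N * ln s + s / N * \<bar>ln (N * c $ n)\<bar>"
        using mult_left_mono[OF abs_ge_minus_self[of "ln (N * c $ n)"], of "s / N"] s N by simp
      moreover have "s / N * ln s \<le> 0"
        using s N by (intro mult_nonneg_nonpos) auto
      ultimately show ?thesis
        using \<open>p $ n = 0\<close> False by (auto simp: M_def)
    qed
    have "RE q c - RE p c = (\<Sum>n\<in>UNIV. q $ n * ln (q $ n / c $ n) - p $ n * ln (p $ n / c $ n))"
      by (simp add: RE_def sum_subtractf)
    also have "\<dots> \<le> (\<Sum>n\<in>UNIV. s * M n + (if n = k then s / N * ln s else 0))"
      by (rule sum_mono) (rule increment)
    also have "\<dots> = s * (\<Sum>n\<in>UNIV. M n) + s / N * ln s"
      by (simp add: sum.distrib sum_distrib_left)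
    finally show ?thesis
      unfolding q_def .
  qed
  ultimately show ?thesis
    using that unfolding u_def N_def by blast
qed

lemma RE_projection_pos:
  fixes c p :: "real^'n"
  assumes \<epsilon>: "0 \<le> \<epsilon>" "\<epsilon> < 1" and c: "\<And>n. 0 < c $ n" and proj: "RE_projection \<epsilon> c p"
  shows "0 < p $ k"
proof (rule ccontr)
  assume "\<not> 0 < p $ k"
  have p: "p \<in> capped_simplex \<epsilon>" using proj by (simp add: RE_projection_def)
  with \<open>\<not> 0 < p $ k\<close> have "p $ k = 0"
    using capped_simplexD(2)[OF p, of k] by simp
  then obtain K where K: "0 \<le> K" and decrease: "\<And>s. 0 < s \<Longrightarrow> s \<le> 1 \<Longrightarrow>
      RE ((1 - s) *\<^sub>R p + s *\<^sub>R (\<chi> n. 1 / real CARD('n))) c - RE p c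
        \<le> s * K + s / real CARD('n) * ln s"
    using RE_towards_uniform_le[OF c p] by blast
  define N where "N = real CARD('n)"
  have N: "0 < N" by (simp add: N_def)
  define s where "s = exp (- (N * K + 1))"
  have "0 \<le> N * K"
    using N K by simp
  then have s: "0 < s" "s \<le> 1"
    by (simp_all add: s_def)
  define q where "q = (1 - s) *\<^sub>R p + s *\<^sub>R (\<chi> n. 1 / real CARD('n))"
  have "q \<in> capped_simplex \<epsilon>"
    unfolding q_def using s uniform_in_capped_simplex[OF \<epsilon>]
    by (intro convexD[OF convex_capped_simplex p]) auto
  then have "RE p c \<le> RE q c"
    using proj by (simp add: RE_projection_def)
  moreover have "RE q c - RE p c \<le> - s / N"
    using decrease[OF s] N by (simp add: q_def N_def[symmetric] s_def field_simps)
  moreover have "0 < s / N"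
    using s N by simp
  ultimately show False
    by linarith
qed

lemma RE_projection_first_order:
  fixes c p u :: "real^'n"
  assumes c: "\<And>n. 0 < c $ n" and proj: "RE_projection \<epsilon> c p" and p: "\<And>n. 0 < p $ n"
    and u: "u \<in> capped_simplex \<epsilon>"
  shows "0 \<le> (\<Sum>n\<in>UNIV. (u $ n - p $ n) * ln (p $ n / c $ n))"
proof (rule linear_coeff_nonneg)
  define d where "d n = u $ n - p $ n" for n
  have p_simplex: "p \<in> capped_simplex \<epsilon>" using proj by (simp add: RE_projection_def)
  have d_sum: "(\<Sum>n\<in>UNIV. d n) = 0"
    using capped_simplexD(1)[OF p_simplex] capped_simplexD(1)[OF u] by (simp add: d_def sum_subtractf)
  fix s :: real
  assume s: "0 < s" "s \<le> 1"
  define q where "q = (1 - s) *\<^sub>R p + s *\<^sub>R u"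
  have q: "q \<in> capped_simplex \<epsilon>"
    unfolding q_def using s by (intro convexD[OF convex_capped_simplex p_simplex u]) auto
  have q_minus_p: "q $ n - p $ n = s * d n" for n
    by (simp add: q_def d_def algebra_simps)
  have "0 \<le> RE q c - RE p c"
    using proj q by (simp add: RE_projection_def)
  also have "\<dots> \<le> (\<Sum>n\<in>UNIV. (ln (p $ n / c $ n) + 1) * (q $ n - p $ n) + (q $ n - p $ n)\<^sup>2 / p $ n)"
    unfolding RE_def sum_subtractf[symmetric]
    using p c capped_simplexD(2)[OF q] by (intro sum_mono entropy_term_increment_le) auto
  also have "\<dots> = s * (\<Sum>n\<in>UNIV. d n * ln (p $ n / c $ n)) + s * (\<Sum>n\<in>UNIV. d n)
      + s\<^sup>2 * (\<Sum>n\<in>UNIV. (d n)\<^sup>2 / p $ n)"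
    unfolding q_minus_p
    by (simp add: sum.distrib sum_distrib_left power_mult_distrib distrib_left distrib_right mult_ac)
  finally show "0 \<le> s * (\<Sum>n\<in>UNIV. (u $ n - p $ n) * ln (p $ n / c $ n))
      + s\<^sup>2 * (\<Sum>n\<in>UNIV. (d n)\<^sup>2 / p $ n)"
    unfolding d_sum by (simp add: d_def)
qed

lemma RE_projection_pythagoras:
  fixes c p u :: "real^'n"
  assumes \<epsilon>: "0 \<le> \<epsilon>" "\<epsilon> < 1" and c: "\<And>n. 0 < c $ n" and proj: "RE_projection \<epsilon> c p"
    and u: "u \<in> capped_simplex \<epsilon>"
  shows "RE u p + RE p c \<le> RE u c"
proof -
  have p: "0 < p $ n" for n
    by (rule RE_projection_pos[OF \<epsilon> c proj])
  have "u $ n * ln (u $ n / c $ n) = u $ n * ln (u $ n / p $ n) + u $ n * ln (p $ n / c $ n)" for n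
  proof (cases "u $ n = 0")
    case False
    then have "0 < u $ n" using capped_simplexD(2)[OF u, of n] by simp
    then show ?thesis using p[of n] c[of n] by (simp add: ln_div algebra_simps)
  qed simp
  then have "RE u c = RE u p + (\<Sum>n\<in>UNIV. u $ n * ln (p $ n / c $ n))"
    by (simp add: RE_def sum.distrib)
  also have "(\<Sum>n\<in>UNIV. u $ n * ln (p $ n / c $ n))
      = RE p c + (\<Sum>n\<in>UNIV. (u $ n - p $ n) * ln (p $ n / c $ n))"
    by (simp add: RE_def left_diff_distrib sum_subtractf)
  finally show ?thesis
    using RE_projection_first_order[OF c proj p u] by linarith
qed

section \<open>Regret of projected multiplicative weights\<close>

definition mw_update :: "real \<Rightarrow> real^'n \<Rightarrow> real^'n \<Rightarrow> real^'n" where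
  "mw_update \<eta> m w = (\<chi> n. w $ n * (1 - \<eta> * m $ n))"

lemma mw_update_pos:
  assumes "0 < w $ n" "\<eta> * m $ n < 1"
  shows "0 < mw_update \<eta> m w $ n"
  using assms by (simp add: mw_update_def)

lemma RE_mw_update_le:
  fixes w m u :: "real^'n"
  assumes u: "\<And>n. 0 \<le> u $ n" and w: "\<And>n. 0 < w $ n"
    and m: "\<And>n. 0 \<le> m $ n" "\<And>n. m $ n \<le> \<nu>" and \<eta>: "0 < \<eta>" "\<eta> * \<nu> \<le> 1/2"
  shows "RE u (mw_update \<eta> m w) \<le> RE u w + \<eta> * (1 + \<eta> * \<nu>) * (m \<bullet> u)"
proof -
  have "u $ n * ln (u $ n / mw_update \<eta> m w $ n)
      \<le> u $ n * ln (u $ n / w $ n) + \<eta> * (1 + \<eta> * \<nu>) * (m $ n * u $ n)" for n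
  proof (cases "u $ n = 0")
    case False
    then have "0 < u $ n" using u[of n] by linarith
    have \<eta>m: "0 \<le> \<eta> * m $ n" "\<eta> * m $ n \<le> \<eta> * \<nu>"
      using \<eta> m by (simp_all add: mult_left_mono)
    have "ln (u $ n / mw_update \<eta> m w $ n) = ln (u $ n / w $ n) - ln (1 - \<eta> * m $ n)"
      using \<open>0 < u $ n\<close> w[of n] \<eta>m \<eta>(2) by (simp add: mw_update_def ln_div ln_mult)
    also have "\<dots> \<le> ln (u $ n / w $ n) + \<eta> * m $ n + (\<eta> * m $ n)\<^sup>2"
      using ln_one_minus_ge[of "\<eta> * m $ n"] \<eta>m \<eta>(2) by simp
    also have "(\<eta> * m $ n)\<^sup>2 \<le> \<eta> * m $ n * (\<eta> * \<nu>)"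
      unfolding power2_eq_square by (rule mult_left_mono[OF \<eta>m(2) \<eta>m(1)])
    finally have "u $ n * ln (u $ n / mw_update \<eta> m w $ n)
        \<le> u $ n * (ln (u $ n / w $ n) + \<eta> * m $ n + \<eta> * m $ n * (\<eta> * \<nu>))"
      using \<open>0 < u $ n\<close> by (simp add: mult_left_mono)
    then show ?thesis
      by (simp add: algebra_simps)
  qed simp
  then show ?thesis
    unfolding RE_def inner_vec_def by (simp add: sum_distrib_left sum_mono flip: sum.distrib)
qed

lemma RE_mw_update_ge:
  fixes w m p :: "real^'n"
  assumes w: "(\<Sum>n\<in>UNIV. w $ n) = 1" and p: "(\<Sum>n\<in>UNIV. p $ n) = 1" "\<And>n. 0 \<le> p $ n"
    and c: "\<And>n. 0 < mw_update \<eta> m w $ n"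
  shows "\<eta> * (m \<bullet> w) \<le> RE p (mw_update \<eta> m w)"
proof -
  have "(\<Sum>n\<in>UNIV. p $ n - mw_update \<eta> m w $ n) \<le> RE p (mw_update \<eta> m w)"
    unfolding RE_def using p(2) c by (intro sum_mono entropy_term_ge)
  moreover have "(\<Sum>n\<in>UNIV. p $ n - mw_update \<eta> m w $ n)
      = (\<Sum>n\<in>UNIV. (p $ n - w $ n) + \<eta> * (m $ n * w $ n))"
    by (rule sum.cong) (simp_all add: mw_update_def algebra_simps)
  ultimately show ?thesis
    using w p(1) by (simp add: sum.distrib sum_subtractf inner_vec_def flip: sum_distrib_left)
qed

lemma multiplicative_weights_step:
  fixes w m p u :: "real^'n"
  assumes \<epsilon>: "0 \<le> \<epsilon>" "\<epsilon> < 1" and w: "w \<in> capped_simplex \<epsilon>" "\<And>n. 0 < w $ n"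
    and m: "\<And>n. 0 \<le> m $ n" "\<And>n. m $ n \<le> \<nu>" and \<eta>: "0 < \<eta>" "\<eta> * \<nu> \<le> 1/2"
    and proj: "RE_projection \<epsilon> (mw_update \<eta> m w) p" and u: "u \<in> capped_simplex \<epsilon>"
  shows "RE u p \<le> RE u w + \<eta> * (1 + \<eta> * \<nu>) * (m \<bullet> u) - \<eta> * (m \<bullet> w)"
proof -
  have "\<eta> * m $ n < 1" for n
    using mult_left_mono[OF m(2)[of n], of \<eta>] \<eta> by linarith
  then have c: "0 < mw_update \<eta> m w $ n" for n
    using w(2) by (intro mw_update_pos)
  have p: "p \<in> capped_simplex \<epsilon>"
    using proj by (simp add: RE_projection_def)
  have "RE u p + RE p (mw_update \<eta> m w) \<le> RE u (mw_update \<eta> m w)"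
    by (rule RE_projection_pythagoras[OF \<epsilon> c proj u])
  moreover have "\<eta> * (m \<bullet> w) \<le> RE p (mw_update \<eta> m w)"
    using capped_simplexD[OF w(1)] capped_simplexD[OF p] c by (intro RE_mw_update_ge)
  moreover have "RE u (mw_update \<eta> m w) \<le> RE u w + \<eta> * (1 + \<eta> * \<nu>) * (m \<bullet> u)"
    using capped_simplexD(2)[OF u] w(2) m \<eta> by (intro RE_mw_update_le)
  ultimately show ?thesis
    by linarith
qed

lemma multiplicative_weights_regret:
  fixes w m :: "nat \<Rightarrow> real^'n" and u :: "real^'n"
  assumes \<epsilon>: "0 \<le> \<epsilon>" "\<epsilon> < 1" and w1: "w 1 \<in> capped_simplex \<epsilon>" "\<And>n. 0 < w 1 $ n"
    and proj: "\<And>t. 1 \<le> t \<Longrightarrow> t \<le> T \<Longrightarrow> RE_projection \<epsilon> (mw_update \<eta> (m t) (w t)) (w (Suc t))"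
    and m: "\<And>t n. 0 \<le> m t $ n" "\<And>t n. m t $ n \<le> \<nu>" and \<eta>: "0 < \<eta>" "\<eta> * \<nu> \<le> 1/2"
    and u: "u \<in> capped_simplex \<epsilon>"
  shows "\<eta> * (\<Sum>t=1..T. m t \<bullet> w t) \<le> RE u (w 1) + \<eta> * (1 + \<eta> * \<nu>) * (\<Sum>t=1..T. m t \<bullet> u)"
proof -
  have iterate: "w t \<in> capped_simplex \<epsilon> \<and> (\<forall>n. 0 < w t $ n)" if "1 \<le> t" "t \<le> Suc T" for t
    using that
  proof (induction t)
    case (Suc t)
    show ?case
    proof (cases "t = 0")
      case False
      then have t: "1 \<le> t" "t \<le> T" using Suc.prems by auto
      have "\<eta> * m t $ n < 1" for n
        using mult_left_mono[OF m(2)[of t n], of \<eta>] \<eta> by linarith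
      then have "0 < mw_update \<eta> (m t) (w t) $ n" for n
        using Suc.IH t by (intro mw_update_pos) auto
      then show ?thesis
        using proj[OF t] RE_projection_pos[OF \<epsilon>] by (auto simp: RE_projection_def)
    qed (use w1 in simp)
  qed simp
  have "RE u (w (Suc t)) - RE u (w t) \<le> \<eta> * (1 + \<eta> * \<nu>) * (m t \<bullet> u) - \<eta> * (m t \<bullet> w t)"
    if "t \<in> {1..T}" for t
    using multiplicative_weights_step[OF \<epsilon> _ _ m(1)[of t] m(2)[of t] \<eta> proj u] iterate[of t] that
    by auto
  then have "(\<Sum>t=1..T. RE u (w (Suc t)) - RE u (w t))
      \<le> (\<Sum>t=1..T. \<eta> * (1 + \<eta> * \<nu>) * (m t \<bullet> u) - \<eta> * (m t \<bullet> w t))"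
    by (rule sum_mono)
  moreover have "(\<Sum>t=1..T. RE u (w (Suc t)) - RE u (w t)) = RE u (w (Suc T)) - RE u (w 1)"
    by (rule sum_Suc_diff) simp
  moreover have "0 \<le> RE u (w (Suc T))"
    using iterate[of "Suc T"] capped_simplexD[OF u] capped_simplexD(1)[of "w (Suc T)"]
    by (intro RE_nonneg) auto
  ultimately show ?thesis
    by (simp add: sum_subtractf sum_distrib_left)
qed

lemma dist_sq_le_diam_sq: "(norm (g i - g j))\<^sup>2 \<le> diam_sq g"
  for g :: "'n::finite \<Rightarrow> real^'p"
proof -
  have "finite {(norm (g i - g j))\<^sup>2 | i j. True}"
    using finite_image_set2[of "\<lambda>_. True" "\<lambda>_. True" "\<lambda>i j. (norm (g i - g j))\<^sup>2"] by simp
  then show ?thesis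
    unfolding diam_sq_def by (rule Max_ge) auto
qed

lemma center_dist_sq_le_diam_sq:
  fixes g :: "'n::finite \<Rightarrow> real^'p"
  assumes "\<mu> \<in> convex hull (range g)"
  shows "(g n - \<mu>) \<bullet> (g n - \<mu>) \<le> diam_sq g"
proof -
  have "range g \<subseteq> cball (g n) (sqrt (diam_sq g))"
    using dist_sq_le_diam_sq[of g n] by (auto simp: dist_norm intro!: real_le_rsqrt)
  then have "convex hull (range g) \<subseteq> cball (g n) (sqrt (diam_sq g))"
    by (intro hull_minimal convex_cball)
  then have "norm (g n - \<mu>) \<le> sqrt (diam_sq g)"
    using assms by (auto simp: dist_norm)
  moreover have "0 \<le> diam_sq g"
    using dist_sq_le_diam_sq[of g n n] by simp
  ultimately show ?thesis
    by (metis norm_ge_zero power2_norm_eq_inner real_sqrt_le_iff real_sqrt_pow2 power_mono)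
qed

lemma transpose_S_mat: "transpose (S_mat g \<mu> w t) = S_mat g \<mu> w t"
  by (simp add: S_mat_def transpose_sum transpose_scalar)

lemma rho_mat_eq_gibbs_state:
  "rho_mat \<eta>\<rho> g \<mu> w t = gibbs_state (\<eta>\<rho> *\<^sub>R (\<Sum>t'=1..t. S_mat g \<mu> w t'))"
  by (simp add: rho_mat_def gibbs_state_def Let_def)

lemma frob_inner_S_mat_rho_mat: "frob_inner (S_mat g \<mu> w t) (rho_mat \<eta>\<rho> g \<mu> w t) = loss \<eta>\<rho> g \<mu> w t \<bullet> w t"
  by (simp add: S_mat_def loss_def frob_inner_sum_left frob_inner_scaleR_left frob_inner_outer_left
      inner_vec_def mult.commute)

lemma loss_bounds:
  fixes g :: "'n::finite \<Rightarrow> real^'p"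
  assumes "\<mu> \<in> convex hull (range g)"
  shows "0 \<le> loss \<eta>\<rho> g \<mu> w t $ n" and "loss \<eta>\<rho> g \<mu> w t $ n \<le> diam_sq g"
proof -
  have sym: "transpose (\<eta>\<rho> *\<^sub>R (\<Sum>t'=1..t. S_mat g \<mu> w t')) = \<eta>\<rho> *\<^sub>R (\<Sum>t'=1..t. S_mat g \<mu> w t')"
    by (simp add: transpose_scalar transpose_sum transpose_S_mat)
  show "0 \<le> loss \<eta>\<rho> g \<mu> w t $ n"
    using gibbs_state_quadratic_form_bounds(1)[OF sym] by (simp add: loss_def rho_mat_eq_gibbs_state)
  have "loss \<eta>\<rho> g \<mu> w t $ n \<le> (g n - \<mu>) \<bullet> (g n - \<mu>)"
    using gibbs_state_quadratic_form_bounds(2)[OF sym] by (simp add: loss_def rho_mat_eq_gibbs_state)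
  also have "\<dots> \<le> diam_sq g"
    by (rule center_dist_sq_le_diam_sq[OF assms])
  finally show "loss \<eta>\<rho> g \<mu> w t $ n \<le> diam_sq g" .
qed

lemma diam_sq_nonneg: "0 \<le> diam_sq g"
  for g :: "'n::finite \<Rightarrow> real^'p"
  using dist_sq_le_diam_sq[of g undefined undefined] by simp

lemma mw_mmw_run_capped_simplex:
  assumes run: "mw_mmw_run \<epsilon> \<eta>w \<eta>\<rho> g \<mu> T w" and t: "1 \<le> t" "t \<le> Suc T"
  shows "w t \<in> capped_simplex \<epsilon>"
proof (cases "t = 1")
  case False
  then obtain t' where "t = Suc t'" "1 \<le> t'" "t' \<le> T"
    using t by (cases t) auto
  then show ?thesis using run by (simp add: mw_mmw_run_def)
qed (use run in \<open>simp add: mw_mmw_run_def\<close>)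

lemma mw_mmw_matrix_regret:
  fixes g :: "'n::finite \<Rightarrow> real^'p::finite"
  assumes "0 < \<eta>\<rho>" "\<rho> \<in> density_matrices"
  shows "(\<Sum>t=1..T. frob_inner (S_mat g \<mu> w t) \<rho>)
    \<le> (\<Sum>t=1..T. loss \<eta>\<rho> g \<mu> w t \<bullet> w t) + ln (real CARD('p)) / \<eta>\<rho>"
proof -
  have "frob_inner (S_mat g \<mu> w t) (gibbs_state (\<eta>\<rho> *\<^sub>R (\<Sum>t'=1..t. S_mat g \<mu> w t')))
      = loss \<eta>\<rho> g \<mu> w t \<bullet> w t" for t
    using frob_inner_S_mat_rho_mat[of g \<mu> w t \<eta>\<rho>] by (simp add: rho_mat_eq_gibbs_state)
  then show ?thesis
    using matrix_exponential_weights_regret[where S = "S_mat g \<mu> w" and T = T, OF transpose_S_mat assms]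
    by simp
qed

lemma mw_mmw_weight_regret:
  fixes g :: "'n::finite \<Rightarrow> real^'p::finite" and w :: "nat \<Rightarrow> real^'n"
  assumes \<epsilon>: "0 \<le> \<epsilon>" "\<epsilon> < 1" and \<mu>: "\<mu> \<in> convex hull (range g)"
    and run: "mw_mmw_run \<epsilon> \<eta>w \<eta>\<rho> g \<mu> T w" and w1: "\<forall>n. 0 < w 1 $ n"
    and \<eta>: "0 < \<eta>w" "\<eta>w * diam_sq g \<le> 1/2" and u: "u \<in> capped_simplex \<epsilon>"
  shows "(\<Sum>t=1..T. loss \<eta>\<rho> g \<mu> w t \<bullet> w t)
    \<le> (1 + \<eta>w * diam_sq g) * (\<Sum>t=1..T. loss \<eta>\<rho> g \<mu> w t \<bullet> u) + RE u (w 1) / \<eta>w"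
proof -
  have "\<eta>w * (\<Sum>t=1..T. loss \<eta>\<rho> g \<mu> w t \<bullet> w t)
      \<le> RE u (w 1) + \<eta>w * (1 + \<eta>w * diam_sq g) * (\<Sum>t=1..T. loss \<eta>\<rho> g \<mu> w t \<bullet> u)"
  proof (rule multiplicative_weights_regret[OF \<epsilon> _ _ _ loss_bounds[OF \<mu>] \<eta> u])
    show "w 1 \<in> capped_simplex \<epsilon>" "\<And>n. 0 < w 1 $ n"
      using run w1 by (simp_all add: mw_mmw_run_def)
    show "RE_projection \<epsilon> (mw_update \<eta>w (loss \<eta>\<rho> g \<mu> w t) (w t)) (w (Suc t))"
      if "1 \<le> t" "t \<le> T" for t
      using run that by (simp add: mw_mmw_run_def RE_projection_def w_tilde_def mw_update_def)
  qed
  then show ?thesis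
    using \<eta>(1) by (simp add: field_simps)
qed

lemma mw_mmw_regret:
  fixes g :: "'n::finite \<Rightarrow> real^'p::finite" and w :: "nat \<Rightarrow> real^'n"
  assumes \<epsilon>: "0 \<le> \<epsilon>" "\<epsilon> < 1" and \<mu>: "\<mu> \<in> convex hull (range g)"
    and run: "mw_mmw_run \<epsilon> \<eta>w \<eta>\<rho> g \<mu> T w" and w1: "\<forall>n. 0 < w 1 $ n"
    and \<eta>: "0 < \<eta>\<rho>" "0 < \<eta>w" "\<eta>w * diam_sq g \<le> 1/2"
    and u: "u \<in> capped_simplex \<epsilon>" and \<rho>: "\<rho> \<in> density_matrices"
  shows "(\<Sum>t=1..T. frob_inner (S_mat g \<mu> w t) \<rho>)
    \<le> (1 + \<eta>\<rho> * diam_sq g) * (1 + \<eta>w * diam_sq g) * (\<Sum>t=1..T. loss \<eta>\<rho> g \<mu> w t \<bullet> u)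
      + (1 + \<eta>\<rho> * diam_sq g) * RE u (w 1) / \<eta>w + ln (real CARD('p)) / \<eta>\<rho>"
proof -
  define a where "a = (\<Sum>t=1..T. loss \<eta>\<rho> g \<mu> w t \<bullet> w t)"
  define B where "B = (1 + \<eta>w * diam_sq g) * (\<Sum>t=1..T. loss \<eta>\<rho> g \<mu> w t \<bullet> u) + RE u (w 1) / \<eta>w"
  have "0 \<le> a"
    unfolding a_def inner_vec_def
    using loss_bounds(1)[OF \<mu>] capped_simplexD(2)[OF mw_mmw_run_capped_simplex[OF run]]
    by (intro sum_nonneg) auto
  moreover have "0 \<le> \<eta>\<rho> * diam_sq g"
    using \<eta>(1) diam_sq_nonneg[of g] by simp
  ultimately have "a \<le> (1 + \<eta>\<rho> * diam_sq g) * a"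
    by (simp add: distrib_right)
  also have "\<dots> \<le> (1 + \<eta>\<rho> * diam_sq g) * B"
    using mw_mmw_weight_regret[OF \<epsilon> \<mu> run w1 \<eta>(2,3) u] \<open>0 \<le> \<eta>\<rho> * diam_sq g\<close>
    by (intro mult_left_mono) (simp_all add: a_def B_def)
  finally show ?thesis
    using mw_mmw_matrix_regret[OF \<eta>(1) \<rho>, of g \<mu> w T]
    by (simp add: a_def B_def algebra_simps)
qed

theorem mainTheorem5:
  fixes g :: "'n::finite \<Rightarrow> real^'p::finite"
    and \<mu> :: "real^'p" and \<epsilon> \<eta>w \<eta>\<rho> :: real and T :: nat and w :: "nat \<Rightarrow> real^'n"
  assumes "0 \<le> \<epsilon>" "\<epsilon> < 1"
    and "T \<ge> 1"
    and "\<mu> \<in> convex hull (range g)"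
    and "mw_mmw_run \<epsilon> \<eta>w \<eta>\<rho> g \<mu> T w"
    and "\<forall>n. 0 < w 1 $ n"
    and "0 < \<eta>\<rho> * diam_sq g" "\<eta>\<rho> * diam_sq g \<le> 1/2"
    and "0 < \<eta>w * diam_sq g" "\<eta>w * diam_sq g \<le> 1/2"
    and "\<eta>\<rho> > 0" "\<eta>w > 0"
  shows "(\<forall>u\<in>capped_simplex \<epsilon>. \<forall>\<rho>\<in>density_matrices.
      (\<Sum>t=1..T. frob_inner (S_mat g \<mu> w t) \<rho>)
        \<le> (1 + \<eta>\<rho> * diam_sq g) * (1 + \<eta>w * diam_sq g) * (\<Sum>t=1..T. (loss \<eta>\<rho> g \<mu> w t) \<bullet> u)
          + (1 + \<eta>\<rho> * diam_sq g) * RE u (w 1) / \<eta>w + ln (real CARD('p)) / \<eta>\<rho>)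
    \<and> (w 1 = (\<chi> n. 1 / real CARD('n)) \<longrightarrow>
      (\<forall>u\<in>capped_simplex \<epsilon>. \<forall>\<rho>\<in>density_matrices.
      (\<Sum>t=1..T. frob_inner (S_mat g \<mu> w t) \<rho>)
        \<le> (1 + \<eta>\<rho> * diam_sq g) * (1 + \<eta>w * diam_sq g) * (\<Sum>t=1..T. (loss \<eta>\<rho> g \<mu> w t) \<bullet> u)
          + (1 + \<eta>\<rho> * diam_sq g) * ln (1 / (1 - \<epsilon>)) / \<eta>w + ln (real CARD('p)) / \<eta>\<rho>))"
proof (intro conjI impI ballI)
  fix u :: "real^'n" and \<rho> :: "real^'p^'p"
  assume "u \<in> capped_simplex \<epsilon>" "\<rho> \<in> density_matrices"
  then show "(\<Sum>t=1..T. frob_inner (S_mat g \<mu> w t) \<rho>)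
      \<le> (1 + \<eta>\<rho> * diam_sq g) * (1 + \<eta>w * diam_sq g) * (\<Sum>t=1..T. loss \<eta>\<rho> g \<mu> w t \<bullet> u)
        + (1 + \<eta>\<rho> * diam_sq g) * RE u (w 1) / \<eta>w + ln (real CARD('p)) / \<eta>\<rho>"
    by (rule mw_mmw_regret[OF assms(1,2,4,5,6,11,12,10)])
next
  fix u :: "real^'n" and \<rho> :: "real^'p^'p"
  assume "w 1 = (\<chi> n. 1 / real CARD('n))" and u: "u \<in> capped_simplex \<epsilon>"
    and \<rho>: "\<rho> \<in> density_matrices"
  then have "RE u (w 1) \<le> ln (1 / (1 - \<epsilon>))"
    using RE_uniform_le[OF assms(1,2) u] by simp
  then have "(1 + \<eta>\<rho> * diam_sq g) * RE u (w 1) / \<eta>w \<le> (1 + \<eta>\<rho> * diam_sq g) * ln (1 / (1 - \<epsilon>)) / \<eta>w"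
    using assms(7,12) by (intro divide_right_mono mult_left_mono) auto
  with mw_mmw_regret[OF assms(1,2,4,5,6,11,12,10) u \<rho>]
  show "(\<Sum>t=1..T. frob_inner (S_mat g \<mu> w t) \<rho>)
      \<le> (1 + \<eta>\<rho> * diam_sq g) * (1 + \<eta>w * diam_sq g) * (\<Sum>t=1..T. loss \<eta>\<rho> g \<mu> w t \<bullet> u)
        + (1 + \<eta>\<rho> * diam_sq g) * ln (1 / (1 - \<epsilon>)) / \<eta>w + ln (real CARD('p)) / \<eta>\<rho>"
    by linarith
qed

end
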